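(* Assume the stream is in random order. Then with probability at least $\frac{1}{k!}$ the output $S$ of Algorithm 5 satisfies $|S|=k$.
   Context: $V$ is a finite ground set with $|V|=n$; $f:2^V\to\mathbb{R}_{\ge0}$ is monotone, submodular and normalized; $f(e\mid Y)=f(Y\cup\{e\})-f(Y)$. $k\le n$ is a positive integer and $\mathrm{OPT}=\max\{f(S):S\subseteq V,|S|\le k\}$. A stream is an ordering $e_1,\dots,e_n$ of $V$; "random order" means a uniformly random permutation. Algorithm 5 (knows $\mathrm{OPT}$): start with $S=\emptyset$; for $i=1,\dots,n$, add $e_i$ to $S$ if $|S|<k$ and $f(e_i\mid S)\ge\frac{\mathrm{OPT}-f(S)}{k}$; return $S$. *)

theory Defs
  imports "HOL-Probability.Probability" "HOL-Combinatorics.Multiset_Permutations"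
begin

definition monotone_set_fn :: "'a set \<Rightarrow> ('a set \<Rightarrow> real) \<Rightarrow> bool" where
  "monotone_set_fn V f \<longleftrightarrow> (\<forall>A B. A \<subseteq> B \<and> B \<subseteq> V \<longrightarrow> f A \<le> f B)"

definition marginal :: "('a set \<Rightarrow> real) \<Rightarrow> 'a \<Rightarrow> 'a set \<Rightarrow> real" where
  "marginal f e Y = f (Y \<union> {e}) - f Y"

definition submodular :: "'a set \<Rightarrow> ('a set \<Rightarrow> real) \<Rightarrow> bool" where
  "submodular V f \<longleftrightarrow>
     (\<forall>A B e. A \<subseteq> B \<and> B \<subseteq> V \<and> e \<in> V - B \<longrightarrow> marginal f e B \<le> marginal f e A)"

definition OPT :: "'a set \<Rightarrow> ('a set \<Rightarrow> real) \<Rightarrow> nat \<Rightarrow> real" where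
  "OPT V f k = Max {f S | S. S \<subseteq> V \<and> card S \<le> k}"

definition alg5_step :: "('a set \<Rightarrow> real) \<Rightarrow> nat \<Rightarrow> real \<Rightarrow> 'a set \<Rightarrow> 'a \<Rightarrow> 'a set" where
  "alg5_step f k opt S e =
     (if card S < k \<and> marginal f e S \<ge> (opt - f S) / real k then insert e S else S)"

definition alg5 :: "('a set \<Rightarrow> real) \<Rightarrow> nat \<Rightarrow> real \<Rightarrow> 'a list \<Rightarrow> 'a set" where
  "alg5 f k opt stream = foldl (alg5_step f k opt) {} stream"

end

theory Submission
  imports Defs
begin

text \<open>Fix an optimal set \<open>B\<close> with \<open>|B| = k\<close>. Every ordering \<open>\<pi>\<close> of \<open>V\<close> can be relabeled by a
permutation \<open>\<sigma>\<close> of \<open>B\<close> so that Algorithm 5 outputs \<open>k\<close> elements on \<open>map \<sigma> \<pi>\<close>: walking along \<open>\<pi>\<close>,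
as long as \<open>S\<close> is not full all elements of \<open>B\<close> placed so far have been taken, so by submodularity
some still unplaced element of \<open>B\<close> has marginal gain at least \<open>(OPT - f S) / k\<close>, and it is placed at
the current position. Thus the preimages of the successful orderings under the \<open>k!\<close> injections
\<open>map \<sigma>\<close> cover all orderings, and at least a \<open>1/k!\<close> fraction of the orderings is successful.\<close>

lemma monotone_set_fnD: "monotone_set_fn V f \<Longrightarrow> A \<subseteq> B \<Longrightarrow> B \<subseteq> V \<Longrightarrow> f A \<le> f B"
  unfolding monotone_set_fn_def by blast

lemma marginal_nonneg:
  assumes "monotone_set_fn V f" "insert e S \<subseteq> V"
  shows "0 \<le> marginal f e S"
  using monotone_set_fnD[OF assms(1), of S "insert e S"] assms(2) by (auto simp: marginal_def)

lemma submodular_gain_le_sum_marginal: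
  assumes "submodular V f" "finite D" "S \<subseteq> V" "D \<subseteq> V - S"
  shows "f (S \<union> D) - f S \<le> (\<Sum>e\<in>D. marginal f e S)"
  using assms(2,4)
proof (induction D rule: finite_induct)
  case empty
  then show ?case by simp
next
  case (insert e D)
  have "S \<subseteq> S \<union> D" "S \<union> D \<subseteq> V" "e \<in> V - (S \<union> D)"
    using assms(3) insert.prems insert.hyps(2) by auto
  then have "marginal f e (S \<union> D) \<le> marginal f e S"
    using assms(1) unfolding submodular_def by blast
  moreover have "f (S \<union> insert e D) = f (S \<union> D \<union> {e})"
    by (simp add: insert_commute)
  ultimately show ?case using insert unfolding marginal_def by simp
qed

lemma exists_ge_average:
  fixes g :: "'a \<Rightarrow> real"
  assumes "finite D" "D \<noteq> {}" "c \<le> (\<Sum>e\<in>D. g e)"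
  shows "\<exists>e\<in>D. c / real (card D) \<le> g e"
proof (rule ccontr)
  assume "\<not> ?thesis"
  then have "(\<Sum>e\<in>D. g e) < (\<Sum>e\<in>D. c / real (card D))"
    using assms(1,2) by (intro sum_strict_mono) auto
  also have "\<dots> = c"
    using assms(1,2) by simp
  finally show False using assms(3) by simp
qed

lemma exists_marginal_ge_threshold:
  assumes mono: "monotone_set_fn V f" and sub: "submodular V f"
    and B: "finite B" "B \<subseteq> V" "card B \<le> k" "opt \<le> f B"
    and S: "S \<subseteq> V" "f S < opt"
  shows "\<exists>e\<in>B - S. (opt - f S) / real k \<le> marginal f e S"
proof -
  define D where "D = B - S"
  have "D \<noteq> {}"
  proof
    assume "D = {}"
    then have "f B \<le> f S" using monotone_set_fnD[OF mono, of B S] S(1) D_def by auto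
    then show False using B(4) S(2) by simp
  qed
  have D: "finite D" "D \<subseteq> V - S" using B(1,2) D_def by auto
  have "f B \<le> f (S \<union> D)"
    using monotone_set_fnD[OF mono, of B "S \<union> D"] B(2) S(1) D_def by auto
  moreover have "f (S \<union> D) - f S \<le> (\<Sum>e\<in>D. marginal f e S)"
    by (rule submodular_gain_le_sum_marginal[OF sub D(1) S(1) D(2)])
  ultimately have "opt - f S \<le> (\<Sum>e\<in>D. marginal f e S)"
    using B(4) by linarith
  then obtain e where e: "e \<in> D" "(opt - f S) / real (card D) \<le> marginal f e S"
    using exists_ge_average[OF D(1) \<open>D \<noteq> {}\<close>] by blast
  have "card D \<le> k" "0 < card D"
    using card_mono[OF B(1), of D] B(3) D(1) \<open>D \<noteq> {}\<close> D_def by (auto simp: card_gt_0_iff)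
  then have "(opt - f S) / real k \<le> (opt - f S) / real (card D)"
    using S(2) by (intro divide_left_mono) auto
  then have "(opt - f S) / real k \<le> marginal f e S"
    using e(2) by linarith
  then show ?thesis using e(1) D_def by blast
qed

lemma alg5_step_full: "card S = k \<Longrightarrow> alg5_step f k opt S e = S"
  by (simp add: alg5_step_def)

lemma subset_alg5_step: "S \<subseteq> alg5_step f k opt S e"
  by (auto simp: alg5_step_def)

lemma alg5_step_subset: "alg5_step f k opt S e \<subseteq> insert e S"
  by (auto simp: alg5_step_def)

lemma card_alg5_step_le: "finite S \<Longrightarrow> card S \<le> k \<Longrightarrow> card (alg5_step f k opt S e) \<le> k"
  by (auto simp: alg5_step_def card_insert_if)

lemma OPT_attained_with_card:
  assumes "finite V" "monotone_set_fn V f" "k \<le> card V"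
  obtains B where "B \<subseteq> V" "card B = k" "f B = OPT V f k"
proof -
  define F where "F = {f S | S. S \<subseteq> V \<and> card S \<le> k}"
  have "finite F" unfolding F_def using assms(1) by simp
  moreover have "f {} \<in> F" unfolding F_def by auto
  ultimately have "Max F \<in> F" by (intro Max_in) auto
  then obtain S where S: "S \<subseteq> V" "card S \<le> k" "f S = OPT V f k"
    unfolding F_def OPT_def by auto
  have "finite S" using S(1) assms(1) finite_subset by blast
  then have "k - card S \<le> card (V - S)" using assms(3) S(1) by (simp add: card_Diff_subset)
  then obtain T where T: "T \<subseteq> V - S" "card T = k - card S" "finite T"
    by (rule obtain_subset_with_card_n)
  have "card (S \<union> T) = k"
    using T S(2) \<open>finite S\<close> by (subst card_Un_disjoint) auto
  have "S \<union> T \<subseteq> V" using S(1) T(1) by blast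
  then have "f (S \<union> T) \<le> OPT V f k"
    unfolding OPT_def F_def[symmetric] using \<open>card (S \<union> T) = k\<close>
    by (intro Max_ge[OF \<open>finite F\<close>]) (auto simp: F_def)
  moreover have "f S \<le> f (S \<union> T)"
    by (rule monotone_set_fnD[OF assms(2) Un_upper1 \<open>S \<union> T \<subseteq> V\<close>])
  ultimately have "f (S \<union> T) = OPT V f k"
    using S(3) by linarith
  then show ?thesis
    by (rule that[OF \<open>S \<union> T \<subseteq> V\<close> \<open>card (S \<union> T) = k\<close>])
qed

lemma bij_betw_fun_upd_insert:
  assumes "bij_betw g X (A - {a})" "x \<notin> X" "a \<in> A"
  shows "bij_betw (g(x := a)) (insert x X) A"
proof -
  have "bij_betw (g(x := a)) X (A - {a})"
    using assms(1) by (rule bij_betw_cong[THEN iffD1, rotated]) (use assms(2) in auto)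
  then have "bij_betw (g(x := a)) (X \<union> {x}) ((A - {a}) \<union> {a})"
    using notIn_Un_bij_betw3[of x X "g(x := a)" "A - {a}"] assms(2) by simp
  moreover have "(A - {a}) \<union> {a} = A" using assms(3) by auto
  ultimately show ?thesis by simp
qed

lemma card_le_card_mult_card_cover:
  assumes "finite P" "finite \<Sigma>" "finite G"
    and "\<And>\<sigma>. \<sigma> \<in> \<Sigma> \<Longrightarrow> inj_on (h \<sigma>) P"
    and "\<And>\<pi>. \<pi> \<in> P \<Longrightarrow> \<exists>\<sigma>\<in>\<Sigma>. h \<sigma> \<pi> \<in> G"
  shows "card P \<le> card \<Sigma> * card G"
proof -
  have "card P = card (\<Union>\<sigma>\<in>\<Sigma>. {\<pi>\<in>P. h \<sigma> \<pi> \<in> G})"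
    using assms(5) by (intro arg_cong[where f = card]) auto
  also have "\<dots> \<le> (\<Sum>\<sigma>\<in>\<Sigma>. card {\<pi>\<in>P. h \<sigma> \<pi> \<in> G})"
    by (rule card_UN_le[OF assms(2)])
  also have "\<dots> \<le> (\<Sum>\<sigma>\<in>\<Sigma>. card G)"
    using assms(3,4) by (intro sum_mono card_inj_on_le) (auto intro: inj_on_subset)
  finally show ?thesis by simp
qed

locale alg5_benchmark =
  fixes V :: "'a set" and f :: "'a set \<Rightarrow> real" and k :: nat and opt :: real and B :: "'a set"
  assumes finite_V: "finite V"
    and mono: "monotone_set_fn V f"
    and sub: "submodular V f"
    and B_subset: "B \<subseteq> V"
    and card_B: "card B = k"
    and opt_le: "opt \<le> f B"
    and k_pos: "0 < k"
begin

text \<open>\<open>A\<close> is the set of labels from \<open>B\<close> not yet assigned to a stream position: unless \<open>S\<close> is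
full, every assigned label has been taken into \<open>S\<close>.\<close>

definition relabel_invariant :: "'a set \<Rightarrow> 'a set \<Rightarrow> bool" where
  "relabel_invariant A S \<longleftrightarrow> S \<subseteq> V \<and> card S \<le> k \<and> (card S = k \<or> B - A \<subseteq> S)"

lemma finite_B: "finite B"
  using B_subset finite_V finite_subset by blast

lemma relabel_invariant_step_outside_B:
  assumes "relabel_invariant A S" "x \<in> V" "x \<notin> B"
  shows "relabel_invariant A (alg5_step f k opt S x)"
proof -
  have "finite S" using assms(1) finite_V finite_subset unfolding relabel_invariant_def by blast
  then show ?thesis
    using assms subset_alg5_step[of S f k opt x] alg5_step_subset[of f k opt S x]
      card_alg5_step_le[of S k f opt x] alg5_step_full[of S k f opt x]
    unfolding relabel_invariant_def by auto
qed

lemma relabel_invariant_step_choose: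
  assumes "relabel_invariant A S" "A \<subseteq> B" "A \<noteq> {}"
  obtains a where "a \<in> A" "relabel_invariant (A - {a}) (alg5_step f k opt S a)"
proof (cases "card S = k")
  case True
  obtain a where "a \<in> A" using assms(3) by blast
  moreover have "relabel_invariant (A - {a}) (alg5_step f k opt S a)"
    using assms(1) True unfolding relabel_invariant_def alg5_step_full[OF True] by simp
  ultimately show ?thesis by (rule that)
next
  case False
  have S: "S \<subseteq> V" "card S < k" "B - A \<subseteq> S" "finite S"
    using assms(1) False finite_V finite_subset unfolding relabel_invariant_def by auto
  obtain a where a: "a \<in> A" "(opt - f S) / real k \<le> marginal f a S"
  proof (cases "f S < opt")
    case True
    then obtain e where "e \<in> B - S" "(opt - f S) / real k \<le> marginal f e S"
      using exists_marginal_ge_threshold[OF mono sub finite_B B_subset _ opt_le S(1)] card_B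
      by auto
    then show ?thesis using that S(3) by blast
  next
    case False
    obtain a where "a \<in> A" using assms(3) by blast
    moreover have "0 \<le> marginal f a S"
      using marginal_nonneg[OF mono] \<open>a \<in> A\<close> assms(2) B_subset S(1) by blast
    moreover have "(opt - f S) / real k \<le> 0"
      using False k_pos by (simp add: divide_nonpos_pos)
    ultimately show ?thesis by (meson that order_trans)
  qed
  have "alg5_step f k opt S a = insert a S"
    using S(2) a(2) by (simp add: alg5_step_def)
  moreover have "insert a S \<subseteq> V" "card (insert a S) \<le> k" "B - (A - {a}) \<subseteq> insert a S"
    using S a(1) assms(2) B_subset card_insert_le_m1[of k S a] by auto
  ultimately have "relabel_invariant (A - {a}) (alg5_step f k opt S a)"
    unfolding relabel_invariant_def by simp
  then show ?thesis using that a(1) by blast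
qed

lemma exists_relabeling_filling:
  assumes "distinct xs" "set xs \<subseteq> V" "A \<subseteq> B" "card (set xs \<inter> B) = card A" "relabel_invariant A S"
  shows "\<exists>\<sigma>. bij_betw \<sigma> (set xs \<inter> B) A \<and> (\<forall>y. y \<notin> B \<longrightarrow> \<sigma> y = y) \<and>
           card (foldl (alg5_step f k opt) S (map \<sigma> xs)) = k"
  using assms
proof (induction xs arbitrary: A S)
  case Nil
  then have "A = {}" using finite_B finite_subset by fastforce
  have "finite S" using Nil(5) finite_V finite_subset unfolding relabel_invariant_def by blast
  then have "card S = k"
    using Nil(5) card_mono[of S B] card_B unfolding relabel_invariant_def \<open>A = {}\<close> by fastforce
  then show ?case using \<open>A = {}\<close> by (intro exI[of _ id]) (simp add: bij_betw_def)
next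
  case (Cons x xs)
  have xs: "distinct xs" "set xs \<subseteq> V" "x \<notin> set xs" using Cons.prems(1,2) by auto
  show ?case
  proof (cases "x \<in> B")
    case False
    then have "card (set xs \<inter> B) = card A" using Cons.prems(4) by simp
    moreover have "relabel_invariant A (alg5_step f k opt S x)"
      using relabel_invariant_step_outside_B Cons.prems(2,5) False by simp
    ultimately obtain \<sigma> where \<sigma>: "bij_betw \<sigma> (set xs \<inter> B) A" "\<forall>y. y \<notin> B \<longrightarrow> \<sigma> y = y"
        "card (foldl (alg5_step f k opt) (alg5_step f k opt S x) (map \<sigma> xs)) = k"
      using Cons.IH[OF xs(1,2) Cons.prems(3)] by blast
    then show ?thesis using False by (intro exI[of _ \<sigma>]) auto
  next
    case True
    have "finite A" using Cons.prems(3) finite_B finite_subset by blast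
    have "card A = Suc (card (set xs \<inter> B))"
      using Cons.prems(4) True xs(3) by (simp add: insert_absorb)
    then have "A \<noteq> {}" by auto
    then obtain a where a: "a \<in> A" "relabel_invariant (A - {a}) (alg5_step f k opt S a)"
      using relabel_invariant_step_choose[OF Cons.prems(5,3)] by blast
    moreover have "card (set xs \<inter> B) = card (A - {a})"
      using \<open>card A = _\<close> a(1) \<open>finite A\<close> by simp
    moreover have "A - {a} \<subseteq> B" using Cons.prems(3) by blast
    ultimately obtain \<sigma> where \<sigma>: "bij_betw \<sigma> (set xs \<inter> B) (A - {a})" "\<forall>y. y \<notin> B \<longrightarrow> \<sigma> y = y"
        "card (foldl (alg5_step f k opt) (alg5_step f k opt S a) (map \<sigma> xs)) = k"
      using Cons.IH[OF xs(1,2)] by blast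
    have map_eq: "map (\<sigma>(x := a)) xs = map \<sigma> xs"
      using xs(3) by (intro map_cong) auto
    have "foldl (alg5_step f k opt) S (map (\<sigma>(x := a)) (x # xs))
        = foldl (alg5_step f k opt) (alg5_step f k opt S a) (map \<sigma> xs)"
      by (simp only: list.map foldl_Cons fun_upd_same map_eq)
    moreover have "bij_betw (\<sigma>(x := a)) (set (x # xs) \<inter> B) A"
      using bij_betw_fun_upd_insert[OF \<sigma>(1) _ a(1), of x] xs(3) True by simp
    moreover have "\<forall>y. y \<notin> B \<longrightarrow> (\<sigma>(x := a)) y = y"
      using \<sigma>(2) True by simp
    ultimately show ?thesis
      using \<sigma>(3) by metis
  qed
qed

lemma exists_permutation_filling:
  assumes "\<pi> \<in> permutations_of_set V"
  shows "\<exists>\<sigma>. \<sigma> permutes B \<and> card (alg5 f k opt (map \<sigma> \<pi>)) = k"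
proof -
  have \<pi>: "distinct \<pi>" "set \<pi> = V" using assms by (auto simp: permutations_of_set_def)
  then have "set \<pi> \<inter> B = B" using B_subset by auto
  moreover have "relabel_invariant B {}" unfolding relabel_invariant_def using k_pos by simp
  ultimately obtain \<sigma> where \<sigma>: "bij_betw \<sigma> B B" "\<forall>y. y \<notin> B \<longrightarrow> \<sigma> y = y"
      "card (alg5 f k opt (map \<sigma> \<pi>)) = k"
    using exists_relabeling_filling[of \<pi> B "{}"] \<pi> unfolding alg5_def by auto
  have "\<sigma> permutes B"
    using \<sigma>(1,2) by (intro bij_imp_permutes) auto
  then show ?thesis using \<sigma>(3) by blast
qed

lemma card_permutations_of_set_le:
  "card (permutations_of_set V)
     \<le> fact k * card {\<pi>\<in>permutations_of_set V. card (alg5 f k opt \<pi>) = k}"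
  (is "card ?P \<le> _ * card ?G")
proof -
  have "card ?P \<le> card {\<sigma>. \<sigma> permutes B} * card ?G"
  proof (rule card_le_card_mult_card_cover[where h = map])
    show "finite ?P" using finite_V by simp
    show "finite {\<sigma>. \<sigma> permutes B}" using finite_B by (rule finite_permutations)
    show "finite ?G" using finite_V by simp
    show "inj_on (map \<sigma>) ?P" if "\<sigma> \<in> {\<sigma>. \<sigma> permutes B}" for \<sigma>
      using that by (metis inj_mapI inj_on_subset mem_Collect_eq permutes_inj subset_UNIV)
  next
    fix \<pi> assume "\<pi> \<in> ?P"
    then obtain \<sigma> where \<sigma>: "\<sigma> permutes B" "card (alg5 f k opt (map \<sigma> \<pi>)) = k"
      using exists_permutation_filling by blast
    moreover have "map \<sigma> \<pi> \<in> ?P"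
      using \<open>\<pi> \<in> ?P\<close> permutations_of_set_image_permutes[OF permutes_subset[OF \<sigma>(1) B_subset]]
      by blast
    ultimately show "\<exists>\<sigma>\<in>{\<sigma>. \<sigma> permutes B}. map \<sigma> \<pi> \<in> ?G" by blast
  qed
  then show ?thesis
    using card_permutations[OF card_B finite_B] by (simp add: mult.commute)
qed

end

theorem mainTheorem13:
  fixes V :: "'a set" and f :: "'a set \<Rightarrow> real" and k :: nat
  assumes "finite V"
    and "\<forall>S \<subseteq> V. f S \<ge> 0"
    and "monotone_set_fn V f"
    and "submodular V f"
    and "f {} = 0"
    and "0 < k" and "k \<le> card V"
  shows "measure_pmf.prob (pmf_of_set (permutations_of_set V))
           {stream. card (alg5 f k (OPT V f k) stream) = k} \<ge> 1 / fact k"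
proof -
  obtain B where B: "B \<subseteq> V" "card B = k" "f B = OPT V f k"
    using OPT_attained_with_card[OF assms(1,3,7)] .
  interpret alg5_benchmark V f k "OPT V f k" B
    using assms B by unfold_locales auto
  define P where "P = permutations_of_set V"
  define G where "G = {\<pi>\<in>P. card (alg5 f k (OPT V f k) \<pi>) = k}"
  have "finite P" "P \<noteq> {}" unfolding P_def using assms(1) by auto
  have "real (card P) \<le> fact k * real (card G)"
    using card_permutations_of_set_le unfolding P_def G_def
    by (metis of_nat_fact of_nat_le_iff of_nat_mult)
  moreover have "0 < real (card P)"
    using \<open>finite P\<close> \<open>P \<noteq> {}\<close> by (simp add: card_gt_0_iff)
  moreover have prob: "measure_pmf.prob (pmf_of_set P) {stream. card (alg5 f k (OPT V f k) stream) = k}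
      = real (card G) / real (card P)"
    using measure_pmf_of_set[OF \<open>P \<noteq> {}\<close> \<open>finite P\<close>] unfolding G_def by (simp add: Int_def)
  ultimately show ?thesis
    unfolding P_def[symmetric] prob by (simp add: field_simps)
qed

end
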